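(* Let $k$ be a positive integer. Let $T_1,T_2$ be disjoint subsets of $\{0,1,\ldots,k\}$ such that no $t\in T_1$ satisfies $t-1\in T_2$. Let $$A=\left\{\left(3^{a_1}+\cdots+3^{a_m}\right)+2\left(3^{b_1}+\cdots+3^{b_n}\right)\mid \{a_1,\ldots,a_m\}\subseteq T_1,\ \{b_1,\ldots,b_n\}\subseteq T_2\right\}.$$ Then $S(A)$ is an independent Stanley sequence.
   Context: A set of non-negative integers is 3-free if no three of its elements form an arithmetic progression. For a finite 3-free set $A=\{a_0<\cdots<a_k\}$ of non-negative integers, the Stanley sequence $S(A)=(a_n)_{n\ge0}$ is the increasing sequence with initial terms $a_0,\ldots,a_k$ in which each subsequent $a_{n+1}$ is the smallest integer greater than $a_n$ such that $\{a_0,\ldots,a_{n+1}\}$ is 3-free. A Stanley sequence $(a_n)$ is independent if there is a constant $\lambda$ such that for all sufficiently large $k$: $a_{2^k+i}=a_{2^k}+a_i$ for all $0\le i<2^k$, and $a_{2^k}=2a_{2^k-1}-\lambda+1$. *)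

theory Defs
  imports Main
begin

definition three_free :: "nat set \<Rightarrow> bool" where
  "three_free X \<longleftrightarrow> \<not> (\<exists>x\<in>X. \<exists>y\<in>X. \<exists>z\<in>X. x < y \<and> y < z \<and> x + z = 2 * y)"

fun stanley_list :: "nat set \<Rightarrow> nat \<Rightarrow> nat list" where
  "stanley_list A 0 = sorted_list_of_set A"
| "stanley_list A (Suc n) =
     (let l = stanley_list A n
      in l @ [LEAST x. last l < x \<and> three_free (set l \<union> {x})])"

text \<open>The Stanley sequence S(A) = (a_n), for finite nonempty 3-free A.\<close>
definition stanley :: "nat set \<Rightarrow> nat \<Rightarrow> nat" where
  "stanley A n = stanley_list A n ! n"

definition independent :: "(nat \<Rightarrow> nat) \<Rightarrow> bool" where
  "independent a \<longleftrightarrow> (\<exists>lam::int. \<exists>K. \<forall>k\<ge>K.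
      (\<forall>i<2^k. a (2^k + i) = a (2^k) + a i) \<and>
      int (a (2^k)) = 2 * int (a (2^k - 1)) - lam + 1)"

end

theory Submission
  imports Defs
begin

text \<open>
  Starting from ternary01, the numbers with ternary digits 0 and 1 (the Stanley sequence
  S({0})), one processes the digit positions k, k-1, ..., 0 and appends one ternary digit at each
  step, simultaneously to A-so-far and to a set X that is to become the set of terms of S(A).
  At a position in T1 (resp. T2) both sets receive the digits 0 and 1 (resp. 0 and 2); at any
  other position A receives only the digit 0, while X also receives the numbers 3y + 1 with
  y - max A in ternary01.  Throughout, X is 3-free, agrees with A up to max A, and every larger
  non-member of X is the top of a 3-term progression in X; hence the greedy algorithm
  enumerates X, i.e. S(A) lists X in increasing order.  The adjacency hypothesis keeps
  max A + 1 in X whenever a digit 2 is to be appended, which the induction needs at that step.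

  Moreover X is block periodic: for some n, x lies in X iff x mod 3^n does and the digits of x
  above position n are 0 or 1, and X has 2^n elements below 3^n.  Then a(2^n + i) = 3^n + a(i)
  for all i < 2^n, and the same holds for all larger n, which is independence with
  lambda = 2 a(2^n - 1) + 1 - 3^n.
\<close>

section \<open>Ternary digits\<close>

definition ternary_digit :: "nat \<Rightarrow> nat \<Rightarrow> nat" where
  "ternary_digit x t = x div 3^t mod 3"

lemma ternary_cases [case_names 0 1 2]:
  fixes x :: nat
  obtains q where "x = 3 * q" | q where "x = 3 * q + 1" | q where "x = 3 * q + 2"
proof -
  have "x = 3 * (x div 3) + x mod 3"
    by simp
  moreover have "x mod 3 = 0 \<or> x mod 3 = 1 \<or> x mod 3 = 2"
    by linarith
  ultimately show ?thesis
    using that by (metis add_0_right)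
qed

lemma Suc_mult_3_div_mod [simp]:
  "Suc (3 * q) div 3 = q" "Suc (3 * q) mod 3 = 1"
  "Suc (Suc (3 * q)) div 3 = q" "Suc (Suc (3 * q)) mod 3 = 2"
  by presburger+

lemma mult_3_neq_Suc [simp]:
  "3 * q \<noteq> Suc (3 * p)" "3 * q \<noteq> Suc (Suc (3 * p))" "Suc (3 * q) \<noteq> Suc (Suc (3 * p))"
  "Suc (3 * p) \<noteq> 3 * q" "Suc (Suc (3 * p)) \<noteq> 3 * q" "Suc (Suc (3 * p)) \<noteq> Suc (3 * q)"
  by presburger+

lemma ternary_digit_0: "ternary_digit x 0 = x mod 3"
  by (simp add: ternary_digit_def)

lemma ternary_digit_Suc: "ternary_digit x (Suc t) = ternary_digit (x div 3) t"
  by (simp add: ternary_digit_def div_mult2_eq)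

lemma all_ternary_digits:
  "(\<forall>t. P t (ternary_digit x t)) \<longleftrightarrow> P 0 (x mod 3) \<and> (\<forall>t. P (Suc t) (ternary_digit (x div 3) t))"
  by (metis ternary_digit_0 ternary_digit_Suc not0_implies_Suc)

lemma ternary_digits_eqI:
  assumes "\<And>t. ternary_digit x t = ternary_digit y t"
  shows "x = y"
  using assms
proof (induction "x + y" arbitrary: x y rule: less_induct)
  case less
  show ?case
  proof (cases "x + y = 0")
    case False
    have "x div 3 + y div 3 < x + y"
      using False div_less_dividend[of 3 x] div_less_dividend[of 3 y] by fastforce
    then have "x div 3 = y div 3"
      using less.hyps[of "x div 3" "y div 3"] less.prems False by (simp add: ternary_digit_Suc[symmetric])
    moreover have "x mod 3 = y mod 3"
      using less.prems[of 0] by (simp add: ternary_digit_0)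
    ultimately show ?thesis
      by (metis div_mult_mod_eq)
  qed simp
qed

lemma ternary_digit_div: "ternary_digit (x div 3^n) t = ternary_digit x (n + t)"
  by (simp add: ternary_digit_def div_mult2_eq power_add)

lemma ternary_digit_mod: "ternary_digit (x mod 3^n) t = (if t < n then ternary_digit x t else 0)"
proof (cases "t < n")
  case True
  then have "x mod 3^n = 3^t * (x div 3^t mod 3^(n - t)) + x mod 3^t"
    by (metis mod_mult2_eq power_add le_add_diff_inverse less_imp_le_nat)
  moreover have "(3::nat) dvd 3^(n - t)"
    using True by simp
  ultimately show ?thesis
    using True by (simp add: ternary_digit_def mod_mod_cancel)
next
  case False
  then have "(3::nat)^n \<le> 3^t"
    by (simp add: power_increasing_iff)
  then have "x mod 3^n < 3^t"
    by (meson mod_less_divisor order.strict_trans2 zero_less_numeral zero_less_power)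
  then show ?thesis
    using False by (simp add: ternary_digit_def)
qed

lemma ternary_digit_sum:
  assumes "\<forall>u. c u < 3"
  shows "ternary_digit (\<Sum>u<N. c u * 3^u) t = (if t < N then c t else 0)"
  using assms
proof (induction N arbitrary: c t)
  case 0
  then show ?case
    by (simp add: ternary_digit_def)
next
  case (Suc N)
  have sum: "(\<Sum>u<Suc N. c u * 3^u) = c 0 + 3 * (\<Sum>u<N. c (Suc u) * 3^u)"
    by (subst sum.lessThan_Suc_shift) (simp add: sum_distrib_left ac_simps)
  show ?case
  proof (cases t)
    case 0
    with Suc.prems show ?thesis
      unfolding sum by (simp add: ternary_digit_0)
  next
    case (Suc t')
    have "c 0 < 3"
      using Suc.prems by simp
    then have "(c 0 + 3 * (\<Sum>u<N. c (Suc u) * 3^u)) div 3 = (\<Sum>u<N. c (Suc u) * 3^u)"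
      by simp
    with Suc show ?thesis
      unfolding sum using Suc.IH[of "\<lambda>u. c (Suc u)" t'] Suc.prems by (simp add: ternary_digit_Suc)
  qed
qed

lemma ternary_digit_expansion:
  assumes "S1 \<subseteq> {..<N}" "S2 \<subseteq> {..<N}" "S1 \<inter> S2 = {}"
  shows "ternary_digit ((\<Sum>a\<in>S1. 3^a) + 2 * (\<Sum>b\<in>S2. 3^b)) t =
    (if t \<in> S1 then 1 else if t \<in> S2 then 2 else 0)"
proof -
  define c where "c u = (if u \<in> S1 then 1 else if u \<in> S2 then 2 else 0 :: nat)" for u
  have "(\<Sum>u<N. c u * 3^u) = (\<Sum>u<N. (if u \<in> S1 then 3^u else 0) + 2 * (if u \<in> S2 then 3^u else 0))"
    using assms(3) by (intro sum.cong) (auto simp: c_def)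
  also have "\<dots> = (\<Sum>u<N. if u \<in> S1 then 3^u else 0) + 2 * (\<Sum>u<N. if u \<in> S2 then 3^u else 0)"
    by (simp add: sum.distrib sum_distrib_left)
  also have "\<dots> = (\<Sum>a\<in>S1. 3^a) + 2 * (\<Sum>b\<in>S2. 3^b)"
    using assms(1,2) by (simp add: sum.If_cases Int_absorb1 Int_absorb2)
  finally show ?thesis
    using ternary_digit_sum[of c N t] assms(1,2) by (auto simp: c_def)
qed

section \<open>Appending a ternary digit\<close>

definition digit_ext :: "nat set \<Rightarrow> nat set \<Rightarrow> nat set \<Rightarrow> nat set" where
  "digit_ext Y0 Y1 Y2 = {x. x div 3 \<in> [Y0, Y1, Y2] ! (x mod 3)}"

lemma digit_ext_simps [simp]:
  "3 * q \<in> digit_ext Y0 Y1 Y2 \<longleftrightarrow> q \<in> Y0"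
  "Suc (3 * q) \<in> digit_ext Y0 Y1 Y2 \<longleftrightarrow> q \<in> Y1"
  "Suc (Suc (3 * q)) \<in> digit_ext Y0 Y1 Y2 \<longleftrightarrow> q \<in> Y2"
  "0 \<in> digit_ext Y0 Y1 Y2 \<longleftrightarrow> 0 \<in> Y0"
  by (simp_all add: digit_ext_def)

lemma finite_digit_ext:
  assumes "finite Y0" "finite Y1" "finite Y2"
  shows "finite (digit_ext Y0 Y1 Y2)"
proof (rule finite_subset)
  show "digit_ext Y0 Y1 Y2 \<subseteq> (*) 3 ` Y0 \<union> (\<lambda>q. 3 * q + 1) ` Y1 \<union> (\<lambda>q. 3 * q + 2) ` Y2"
  proof
    show "x \<in> digit_ext Y0 Y1 Y2 \<Longrightarrow> x \<in> (*) 3 ` Y0 \<union> (\<lambda>q. 3 * q + 1) ` Y1 \<union> (\<lambda>q. 3 * q + 2) ` Y2" for x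
      by (cases x rule: ternary_cases) auto
  qed
qed (use assms in simp)

lemma Max_digit_ext:
  assumes "finite A" "A \<noteq> {}"
  shows "Max (digit_ext A {} {}) = 3 * Max A"
    and "Max (digit_ext A {} A) = 3 * Max A + 2"
proof -
  have le_Max: "x \<le> Max A" if "x \<in> A" for x
    using assms that by simp
  have "Max A \<in> A"
    using assms by simp
  show "Max (digit_ext A {} {}) = 3 * Max A"
  proof (rule Max_eqI)
    show "y \<le> 3 * Max A" if "y \<in> digit_ext A {} {}" for y
      using that by (cases y rule: ternary_cases) (auto dest: le_Max)
  qed (use assms(1) \<open>Max A \<in> A\<close> finite_digit_ext in simp_all)
  show "Max (digit_ext A {} A) = 3 * Max A + 2"
  proof (rule Max_eqI)
    show "y \<le> 3 * Max A + 2" if "y \<in> digit_ext A {} A" for y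
      using that by (cases y rule: ternary_cases) (auto dest: le_Max)
  qed (use assms(1) \<open>Max A \<in> A\<close> finite_digit_ext in simp_all)
qed

lemma card_digit_ext:
  "card (digit_ext Y0 Y1 Y2 \<inter> {..<3 * N}) =
     card (Y0 \<inter> {..<N}) + card (Y1 \<inter> {..<N}) + card (Y2 \<inter> {..<N})"
proof -
  let ?I = "\<lambda>Y. Y \<inter> {..<N}"
  have eq: "digit_ext Y0 Y1 Y2 \<inter> {..<3 * N} =
      ((*) 3 ` ?I Y0 \<union> (\<lambda>y. 3 * y + 1) ` ?I Y1) \<union> (\<lambda>y. 3 * y + 2) ` ?I Y2"
  proof (rule set_eqI)
    show "x \<in> digit_ext Y0 Y1 Y2 \<inter> {..<3 * N} \<longleftrightarrow>
        x \<in> ((*) 3 ` ?I Y0 \<union> (\<lambda>y. 3 * y + 1) ` ?I Y1) \<union> (\<lambda>y. 3 * y + 2) ` ?I Y2" for x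
      by (cases x rule: ternary_cases) auto
  qed
  have "card (digit_ext Y0 Y1 Y2 \<inter> {..<3 * N}) =
      card ((*) 3 ` ?I Y0 \<union> (\<lambda>y. 3 * y + 1) ` ?I Y1) + card ((\<lambda>y. 3 * y + 2) ` ?I Y2)"
    unfolding eq by (rule card_Un_disjoint) auto
  also have "\<dots> = card ((*) 3 ` ?I Y0) + card ((\<lambda>y. 3 * y + 1) ` ?I Y1) + card ((\<lambda>y. 3 * y + 2) ` ?I Y2)"
    by (subst card_Un_disjoint) auto
  finally show ?thesis
    by (simp add: card_image inj_on_def)
qed

lemma residue_progression:
  fixes a b c d :: nat
  assumes "a < 3" "b < 3" "c < 3" "d = 1 \<or> d = 2" "a \<noteq> d" "b \<noteq> d" "c \<noteq> d"
    and "(a + c) mod 3 = 2 * b mod 3"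
  shows "a = b \<and> c = b"
proof -
  have "a \<in> {0, 1, 2}" "b \<in> {0, 1, 2}" "c \<in> {0, 1, 2}"
    using assms(1-3) by auto
  then show ?thesis
    using assms(4-8) by auto
qed

lemma digit_ext_progression:
  assumes "Y1 = {} \<or> Y2 = {}"
    and "x \<in> digit_ext Y0 Y1 Y2" "y \<in> digit_ext Y0 Y1 Y2" "z \<in> digit_ext Y0 Y1 Y2"
    and "x + z = 2 * y"
  shows "x mod 3 = y mod 3 \<and> z mod 3 = y mod 3 \<and> x div 3 + z div 3 = 2 * (y div 3)"
proof -
  from assms(1) obtain d where d: "d = 1 \<or> d = 2" "[Y0, Y1, Y2] ! d = {}"
    by (metis nth_Cons_0 nth_Cons_Suc numeral_2_eq_2 One_nat_def)
  then have "x mod 3 \<noteq> d" "y mod 3 \<noteq> d" "z mod 3 \<noteq> d"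
    using assms(2-4) by (auto simp: digit_ext_def)
  moreover have "(x mod 3 + z mod 3) mod 3 = 2 * (y mod 3) mod 3"
    using assms(5) by (metis mod_add_eq mod_mult_right_eq)
  ultimately have same: "x mod 3 = y mod 3 \<and> z mod 3 = y mod 3"
    using residue_progression[of "x mod 3" "y mod 3" "z mod 3" d] d(1) by simp
  have "x = 3 * (x div 3) + y mod 3" "z = 3 * (z div 3) + y mod 3" "y = 3 * (y div 3) + y mod 3"
    using same by (metis mult_div_mod_eq)+
  with same assms(5) show ?thesis
    by linarith
qed

lemma three_free_digit_ext:
  assumes "three_free Y0" "three_free Y1" "three_free Y2" and "Y1 = {} \<or> Y2 = {}"
  shows "three_free (digit_ext Y0 Y1 Y2)"
  unfolding three_free_def
proof clarify
  fix x y z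
  assume mem: "x \<in> digit_ext Y0 Y1 Y2" "y \<in> digit_ext Y0 Y1 Y2" "z \<in> digit_ext Y0 Y1 Y2"
    and "x < y" "y < z" "x + z = 2 * y"
  then have same: "x mod 3 = y mod 3 \<and> z mod 3 = y mod 3 \<and> x div 3 + z div 3 = 2 * (y div 3)"
    using digit_ext_progression assms(4) by blast
  let ?Y = "[Y0, Y1, Y2] ! (y mod 3)"
  have "x div 3 \<in> ?Y" "y div 3 \<in> ?Y" "z div 3 \<in> ?Y"
    using mem same by (simp_all add: digit_ext_def)
  moreover have "x div 3 < y div 3" "y div 3 < z div 3"
  proof -
    have "x = 3 * (x div 3) + y mod 3" "z = 3 * (z div 3) + y mod 3" "y = 3 * (y div 3) + y mod 3"
      using same by (metis mult_div_mod_eq)+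
    with \<open>x < y\<close> \<open>y < z\<close> show "x div 3 < y div 3" "y div 3 < z div 3"
      by linarith+
  qed
  moreover have "y mod 3 = 0 \<or> y mod 3 = 1 \<or> y mod 3 = 2"
    by linarith
  then have "three_free ?Y"
    using assms(1-3) by auto
  ultimately show False
    using same unfolding three_free_def by blast
qed

lemma three_free_translate: "three_free X \<Longrightarrow> three_free ((+) m ` X)"
  unfolding three_free_def by fastforce

section \<open>Numbers with ternary digits 0 and 1\<close>

definition ternary01 :: "nat set" where
  "ternary01 = {x. \<forall>t. ternary_digit x t \<noteq> 2}"

lemma ternary01_iff: "x \<in> ternary01 \<longleftrightarrow> x mod 3 \<le> 1 \<and> x div 3 \<in> ternary01"
proof -
  have "x mod 3 \<noteq> 2 \<longleftrightarrow> x mod 3 \<le> 1"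
    by linarith
  then show ?thesis
    using all_ternary_digits[of "\<lambda>_ d. d \<noteq> 2" x] by (simp add: ternary01_def)
qed

lemma ternary01_simps [simp]:
  "3 * q \<in> ternary01 \<longleftrightarrow> q \<in> ternary01"
  "Suc (3 * q) \<in> ternary01 \<longleftrightarrow> q \<in> ternary01"
  "Suc (Suc (3 * q)) \<notin> ternary01"
  by (subst ternary01_iff, simp)+

lemma zero_in_ternary01 [simp]: "0 \<in> ternary01"
  by (simp add: ternary01_def ternary_digit_def)

lemma one_in_ternary01 [simp]: "1 \<in> ternary01"
  using ternary01_simps(2)[of 0] by simp

lemma ternary01_eq_digit_ext: "ternary01 = digit_ext ternary01 ternary01 {}"
proof (rule set_eqI)
  show "x \<in> ternary01 \<longleftrightarrow> x \<in> digit_ext ternary01 ternary01 {}" for x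
    by (cases x rule: ternary_cases) simp_all
qed

lemma ternary01_split: "x \<in> ternary01 \<longleftrightarrow> x mod 3^n \<in> ternary01 \<and> x div 3^n \<in> ternary01"
proof -
  have "(\<forall>t. ternary_digit x t \<noteq> 2) \<longleftrightarrow>
      (\<forall>t<n. ternary_digit x t \<noteq> 2) \<and> (\<forall>t. ternary_digit x (n + t) \<noteq> 2)"
    by (metis le_add_diff_inverse not_less)
  then show ?thesis
    by (auto simp: ternary01_def ternary_digit_mod ternary_digit_div)
qed

lemma three_free_ternary01: "three_free ternary01"
proof -
  have "x = y" if "x \<in> ternary01" "y \<in> ternary01" "z \<in> ternary01" "x + z = 2 * y" for x y z
    using that
  proof (induction y arbitrary: x z rule: less_induct)
    case (less y)
    then have "x \<in> digit_ext ternary01 ternary01 {}" "y \<in> digit_ext ternary01 ternary01 {}"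
      "z \<in> digit_ext ternary01 ternary01 {}"
      using ternary01_eq_digit_ext by auto
    then have same: "x mod 3 = y mod 3 \<and> z mod 3 = y mod 3 \<and> x div 3 + z div 3 = 2 * (y div 3)"
      using less.prems(4) by (intro digit_ext_progression) auto
    show ?case
    proof (cases "y = 0")
      case False
      then have "y div 3 < y"
        by simp
      moreover have "x div 3 \<in> ternary01" "y div 3 \<in> ternary01" "z div 3 \<in> ternary01"
        using less.prems ternary01_iff by blast+
      ultimately have "x div 3 = y div 3"
        using less.IH same by blast
      with same show ?thesis
        by (metis div_mult_mod_eq)
    qed (use less.prems in simp)
  qed
  then show ?thesis
    unfolding three_free_def by fastforce
qed

lemma ternary01_progression:
  "\<exists>a\<in>ternary01. \<exists>b\<in>ternary01. a \<le> b \<and> b \<le> n \<and> a + n = 2 * b \<and>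
     (n \<notin> ternary01 \<longrightarrow> a < b \<and> b < n)"
proof (induction n rule: less_induct)
  case (less n)
  show ?case
  proof (cases "n = 0")
    case False
    then obtain a b where ab: "a \<in> ternary01" "b \<in> ternary01" "a \<le> b" "b \<le> n div 3"
      "a + n div 3 = 2 * b" "n div 3 \<notin> ternary01 \<longrightarrow> a < b \<and> b < n div 3"
      using less.IH[of "n div 3"] by auto
    show ?thesis
    proof (cases n rule: ternary_cases)
      case 0
      with ab show ?thesis
        by (intro bexI[of _ "3 * a"] bexI[of _ "3 * b"]) auto
    next
      case 1
      with ab show ?thesis
        by (intro bexI[of _ "Suc (3 * a)"] bexI[of _ "Suc (3 * b)"]) auto
    next
      case 2
      with ab show ?thesis
        by (intro bexI[of _ "3 * a"] bexI[of _ "Suc (3 * b)"]) auto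
    qed
  qed auto
qed

lemma ternary01_double_less: "s \<in> ternary01 \<Longrightarrow> s < 3^n \<Longrightarrow> 2 * s < 3^n"
proof (induction n arbitrary: s)
  case (Suc n)
  have "s div 3 < 3^n"
    using Suc.prems(2) by (simp add: less_mult_imp_div_less)
  moreover have "s mod 3 \<le> 1" "s div 3 \<in> ternary01"
    using Suc.prems(1) ternary01_iff by blast+
  ultimately have "2 * (s div 3) + 1 \<le> 3^n"
    using Suc.IH by fastforce
  moreover have "s = 3 * (s div 3) + s mod 3"
    by simp
  ultimately have "2 * s < 3 * 3^n"
    using \<open>s mod 3 \<le> 1\<close> by linarith
  then show ?case
    by simp
qed simp

lemma card_ternary01: "card (ternary01 \<inter> {..<3^n}) = 2^n"
proof (induction n)
  case 0
  have "ternary01 \<inter> {..<1} = {0}"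
    by auto
  then show ?case
    by simp
next
  case (Suc n)
  then show ?case
    using card_digit_ext[of ternary01 ternary01 "{}" "3^n"] ternary01_eq_digit_ext by simp
qed

section \<open>Block-periodic sets\<close>

definition block_periodic :: "nat set \<Rightarrow> nat \<Rightarrow> bool" where
  "block_periodic X n \<longleftrightarrow> (\<forall>x. x \<in> X \<longleftrightarrow> x mod 3^n \<in> X \<and> x div 3^n \<in> ternary01)"

lemma block_periodic_empty: "block_periodic {} n"
  by (simp add: block_periodic_def)

lemma block_periodic_ternary01: "block_periodic ternary01 n"
  using ternary01_split by (simp add: block_periodic_def)

lemma block_periodic_digit_ext:
  assumes "block_periodic Y0 n" "block_periodic Y1 n" "block_periodic Y2 n"
  shows "block_periodic (digit_ext Y0 Y1 Y2) (Suc n)"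
  unfolding block_periodic_def
proof
  fix x :: nat
  have "x mod 3 = 0 \<or> x mod 3 = 1 \<or> x mod 3 = 2"
    by linarith
  then have "block_periodic ([Y0, Y1, Y2] ! (x mod 3)) n"
    using assms by auto
  then have "x div 3 \<in> [Y0, Y1, Y2] ! (x mod 3) \<longleftrightarrow>
      x div 3 mod 3^n \<in> [Y0, Y1, Y2] ! (x mod 3) \<and> x div 3 div 3^n \<in> ternary01"
    unfolding block_periodic_def by blast
  moreover have "x mod 3^Suc n = 3 * (x div 3 mod 3^n) + x mod 3"
    by (simp add: mod_mult2_eq)
  ultimately show "x \<in> digit_ext Y0 Y1 Y2 \<longleftrightarrow>
      x mod 3^Suc n \<in> digit_ext Y0 Y1 Y2 \<and> x div 3^Suc n \<in> ternary01"
    by (simp add: digit_ext_def div_mult2_eq)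
qed

lemma block_periodic_Suc:
  assumes "block_periodic X n"
  shows "block_periodic X (Suc n)"
  unfolding block_periodic_def
proof
  fix x :: nat
  have periodic: "y \<in> X \<longleftrightarrow> y mod 3^n \<in> X \<and> y div 3^n \<in> ternary01" for y
    using assms unfolding block_periodic_def by blast
  have "x mod 3^Suc n = 3^n * (x div 3^n mod 3) + x mod 3^n"
    by (simp only: power_Suc2 mod_mult2_eq)
  then have "x mod 3^Suc n mod 3^n = x mod 3^n" "x mod 3^Suc n div 3^n = x div 3^n mod 3"
    by simp_all
  moreover have "x div 3^Suc n = x div 3^n div 3"
    by (simp only: power_Suc2 div_mult2_eq)
  ultimately show "x \<in> X \<longleftrightarrow> x mod 3^Suc n \<in> X \<and> x div 3^Suc n \<in> ternary01"
    using periodic[of x] periodic[of "x mod 3^Suc n"] ternary01_split[of "x div 3^n" 1] by auto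
qed

lemma block_periodic_shift:
  assumes "block_periodic X n" "v < 3^n"
  shows "3^n + v \<in> X \<longleftrightarrow> v \<in> X"
proof -
  have "(3^n + v) mod 3^n = v" "(3^n + v) div 3^n = 1"
    using assms(2) by (simp, intro div_nat_eqI, auto)
  then show ?thesis
    using assms(1) unfolding block_periodic_def by (metis one_in_ternary01)
qed

lemma card_block_periodic_shift:
  assumes "block_periodic X n" "v \<le> 3^n"
  shows "card (X \<inter> {..<3^n + v}) = card (X \<inter> {..<3^n}) + card (X \<inter> {..<v})"
proof -
  have "X \<inter> {..<3^n + v} = X \<inter> {..<3^n} \<union> (+) (3^n) ` (X \<inter> {..<v})"
  proof (rule set_eqI)
    fix x
    show "x \<in> X \<inter> {..<3^n + v} \<longleftrightarrow> x \<in> X \<inter> {..<3^n} \<union> (+) (3^n) ` (X \<inter> {..<v})"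
    proof (cases "x < 3^n")
      case False
      then obtain u where "x = 3^n + u"
        using le_Suc_ex not_less by blast
      then show ?thesis
        using False assms block_periodic_shift[OF assms(1), of u] by auto
    qed auto
  qed
  moreover have "X \<inter> {..<3^n} \<inter> (+) (3^n) ` (X \<inter> {..<v}) = {}"
    by auto
  ultimately show ?thesis
    by (simp add: card_Un_disjoint card_image)
qed

lemma card_block_periodic_Suc:
  assumes "block_periodic X n"
  shows "card (X \<inter> {..<3^Suc n}) = 2 * card (X \<inter> {..<3^n})"
proof -
  have "x < 3^n + 3^n" if "x \<in> X" "x < 3^Suc n" for x
  proof (rule ccontr)
    assume "\<not> x < 3^n + 3^n"
    with that(2) have "x div 3^n = 2"
      by (intro div_nat_eqI) auto
    with that(1) assms show False
      unfolding block_periodic_def by (metis ternary01_simps(3) mult_0_right Suc_1 numeral_2_eq_2)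
  qed
  then have "X \<inter> {..<3^Suc n} = X \<inter> {..<3^n + 3^n}"
    by auto
  then show ?thesis
    using card_block_periodic_shift[OF assms, of "3^n"] by simp
qed

lemma block_periodic_card_mono:
  assumes "block_periodic X n" "card (X \<inter> {..<3^n}) = 2^n" "n \<le> j"
  shows "block_periodic X j \<and> card (X \<inter> {..<3^j}) = 2^j"
  using assms(3) by (induction j rule: dec_induct) (use assms block_periodic_Suc card_block_periodic_Suc in auto)

lemma block_periodic_translate:
  fixes Y :: "nat set"
  assumes "block_periodic Y n" and bounded: "\<forall>r\<in>Y. r < 3^n \<longrightarrow> m + r < 3^n"
  shows "block_periodic ((+) m ` Y) n"
  unfolding block_periodic_def
proof
  fix x :: nat
  have periodic: "y \<in> Y \<longleftrightarrow> y mod 3^n \<in> Y \<and> y div 3^n \<in> ternary01" for y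
    using assms unfolding block_periodic_def by blast
  have split: "(r + 3^n * q) mod 3^n = r \<and> (r + 3^n * q) div 3^n = q" if "r < 3^n" for r q :: nat
    using that by simp
  show "x \<in> (+) m ` Y \<longleftrightarrow> x mod 3^n \<in> (+) m ` Y \<and> x div 3^n \<in> ternary01"
  proof
    assume "x \<in> (+) m ` Y"
    then obtain y where y: "y \<in> Y" "x = m + y"
      by blast
    have r: "y mod 3^n \<in> Y" "y div 3^n \<in> ternary01"
      using y(1) periodic by blast+
    then have "m + y mod 3^n < 3^n"
      using bounded by simp
    moreover have "x = (m + y mod 3^n) + 3^n * (y div 3^n)"
      using y(2) by simp
    ultimately have "x mod 3^n = m + y mod 3^n \<and> x div 3^n = y div 3^n"
      using split by metis
    then show "x mod 3^n \<in> (+) m ` Y \<and> x div 3^n \<in> ternary01"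
      using r by simp
  next
    assume "x mod 3^n \<in> (+) m ` Y \<and> x div 3^n \<in> ternary01"
    then obtain r where r: "r \<in> Y" "x mod 3^n = m + r" "x div 3^n \<in> ternary01"
      by blast
    then have "r < 3^n"
      by (metis le_add2 le_less_trans mod_less_divisor zero_less_numeral zero_less_power)
    then have "r + 3^n * (x div 3^n) \<in> Y"
      using split periodic[of "r + 3^n * (x div 3^n)"] r by simp
    moreover have "x = m + (r + 3^n * (x div 3^n))"
      using r(2) mod_mult_div_eq[of x "3^n"] by linarith
    ultimately show "x \<in> (+) m ` Y"
      by blast
  qed
qed

lemma card_translate:
  fixes Y :: "nat set"
  assumes "\<forall>r\<in>Y. r < 3^n \<longrightarrow> m + r < 3^n"
  shows "card ((+) m ` Y \<inter> {..<3^n}) = card (Y \<inter> {..<3^n})"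
proof -
  have "(+) m ` Y \<inter> {..<3^n} = (+) m ` (Y \<inter> {..<3^n})"
    using assms by auto
  then show ?thesis
    by (simp add: card_image)
qed

section \<open>Independent enumerations\<close>

lemma card_lessThan_strict_mono:
  fixes X :: "nat set"
  assumes "v \<in> X" "v < w"
  shows "card (X \<inter> {..<v}) < card (X \<inter> {..<w})"
proof -
  have "insert v (X \<inter> {..<v}) \<subseteq> X \<inter> {..<w}"
    using assms by auto
  then have "card (insert v (X \<inter> {..<v})) \<le> card (X \<inter> {..<w})"
    by (intro card_mono) auto
  then show ?thesis
    by simp
qed

lemma enumeration_inverse:
  fixes X :: "nat set"
  assumes enum: "\<And>i. f i \<in> X \<and> card (X \<inter> {..<f i}) = i" and "v \<in> X"
  shows "f (card (X \<inter> {..<v})) = v"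
  using enum[of "card (X \<inter> {..<v})"] card_lessThan_strict_mono[of _ X] \<open>v \<in> X\<close>
  by (metis less_irrefl linorder_neqE_nat)

lemma enumeration_block_shift:
  assumes enum: "\<And>i. f i \<in> X \<and> card (X \<inter> {..<f i}) = i"
    and periodic: "block_periodic X j" and dense: "card (X \<inter> {..<3^j}) = 2^j"
    and "i < 2^j"
  shows "f (2^j + i) = 3^j + f i"
proof -
  have "f i < 3^j"
  proof (rule ccontr)
    assume "\<not> f i < 3^j"
    then have "card (X \<inter> {..<3^j}) \<le> card (X \<inter> {..<f i})"
      by (intro card_mono) auto
    with enum[of i] dense \<open>i < 2^j\<close> show False
      by simp
  qed
  then have "3^j + f i \<in> X" and "card (X \<inter> {..<3^j + f i}) = 2^j + i"
    using enum[of i] block_periodic_shift[OF periodic] card_block_periodic_shift[OF periodic] dense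
    by simp_all
  then show ?thesis
    using enumeration_inverse[OF enum] by metis
qed

lemma independent_enumeration:
  assumes enum: "\<And>i. f i \<in> X \<and> card (X \<inter> {..<f i}) = i"
    and "0 \<in> X" "block_periodic X n" "card (X \<inter> {..<3^n}) = 2^n"
  shows "independent f"
proof -
  have shift: "f (2^k + i) = 3^k + f i" if "n \<le> k" "i < 2^k" for k i
    using enumeration_block_shift[OF enum _ _ \<open>i < 2^k\<close>] block_periodic_card_mono assms(3,4) \<open>n \<le> k\<close>
    by blast
  have "f 0 = 0"
    using enumeration_inverse[OF enum \<open>0 \<in> X\<close>] by simp
  then have first: "f (2^k) = 3^k" if "n \<le> k" for k
    using shift[OF that, of 0] by simp
  define lam where "lam = 2 * int (f (2^n - 1)) + 1 - 3^n"
  have lam: "2 * int (f (2^k - 1)) + 1 - 3^k = lam" if "n \<le> k" for k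
    using that
  proof (induction k rule: dec_induct)
    case (step k)
    have "(2::nat)^Suc k - 1 = 2^k + (2^k - 1)"
      by simp
    then have "f (2^Suc k - 1) = 3^k + f (2^k - 1)"
      using shift[OF step(1), of "2^k - 1"] by simp
    with step(3) show ?case
      by simp
  qed (simp add: lam_def)
  show ?thesis
    unfolding independent_def
  proof (intro exI[of _ lam] exI[of _ n] allI impI)
    fix k
    assume "n \<le> k"
    then show "(\<forall>i<2^k. f (2^k + i) = f (2^k) + f i) \<and> int (f (2^k)) = 2 * int (f (2^k - 1)) - lam + 1"
      using shift first lam by force
  qed
qed

section \<open>Stanley sequences as greedy enumerations\<close>

definition blocked_above :: "nat \<Rightarrow> nat set \<Rightarrow> bool" where
  "blocked_above m X \<longleftrightarrow>
     (\<forall>z>m. z \<notin> X \<longrightarrow> (\<exists>a\<in>X. \<exists>b\<in>X. a < b \<and> b < z \<and> a + z = 2 * b))"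

lemma blocked_above_infinite:
  assumes "blocked_above m X"
  shows "infinite X"
proof
  assume "finite X"
  define z where "z = 2 * Max (insert m X) + 1"
  have bound: "x \<le> Max (insert m X)" if "x \<in> insert m X" for x
    using \<open>finite X\<close> that by simp
  then have "m < z" "z \<notin> X"
    unfolding z_def by fastforce+
  then obtain a b where "b \<in> X" "a + z = 2 * b"
    using assms unfolding blocked_above_def by blast
  with bound[of b] show False
    unfolding z_def by simp
qed

lemma sorted_wrt_less_le_last:
  fixes l :: "nat list"
  assumes "sorted_wrt (<) l" "y \<in> set l"
  shows "y \<le> last l"
proof -
  obtain i where "i < length l" "l ! i = y"
    using assms(2) by (auto simp: in_set_conv_nth)
  moreover have "l \<noteq> []"
    using assms(2) by auto
  ultimately show ?thesis
    using sorted_nth_mono[OF strict_sorted_imp_sorted[OF assms(1)], of i "length l - 1"]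
    by (simp add: last_conv_nth)
qed

lemma set_take_sorted_wrt_less:
  fixes l :: "nat list"
  assumes "sorted_wrt (<) l" "i < length l"
  shows "set (take i l) = {x \<in> set l. x < l ! i}"
proof (rule set_eqI)
  fix x
  have "x \<in> set (take i l) \<longleftrightarrow> (\<exists>j<i. l ! j = x)"
    using assms(2) by (auto simp: in_set_conv_nth)
  also have "\<dots> \<longleftrightarrow> (\<exists>j<length l. l ! j = x \<and> l ! j < l ! i)"
    using assms sorted_wrt_nth_less[OF assms(1)] sorted_nth_mono[OF strict_sorted_imp_sorted[OF assms(1)]]
    by (metis leD linorder_not_less order.strict_trans)
  finally show "x \<in> set (take i l) \<longleftrightarrow> x \<in> {x \<in> set l. x < l ! i}"
    by (auto simp: in_set_conv_nth)
qed

lemma greedy_choice_eq: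
  assumes "S = X \<inter> {..b}" "three_free X" "blocked_above m X" "m \<le> b"
  shows "(LEAST x. b < x \<and> three_free (S \<union> {x})) = (LEAST x. x \<in> X \<and> b < x)"
proof -
  obtain x0 where "x0 \<in> X" "b < x0"
    using blocked_above_infinite[OF assms(3)] by (metis finite_nat_set_iff_bounded_le not_le)
  define e where "e = (LEAST x. x \<in> X \<and> b < x)"
  have e: "e \<in> X \<and> b < e"
    unfolding e_def by (rule LeastI[of _ x0]) (use \<open>x0 \<in> X\<close> \<open>b < x0\<close> in auto)
  have e_least: "e \<le> y" if "y \<in> X" "b < y" for y
    unfolding e_def by (rule Least_le) (use that in auto)
  show ?thesis
    unfolding e_def[symmetric]
  proof (rule Least_equality)
    show "b < e \<and> three_free (S \<union> {e})"
      using e assms(1,2) three_free_def by auto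
  next
    fix y
    assume y: "b < y \<and> three_free (S \<union> {y})"
    show "e \<le> y"
    proof (rule ccontr)
      assume "\<not> e \<le> y"
      then have "y \<notin> X"
        using e_least y by fastforce
      moreover have "m < y"
        using assms(4) y by simp
      ultimately obtain u v where "u \<in> X" "v \<in> X" "u < v" "v < y" "u + y = 2 * v"
        using assms(3) unfolding blocked_above_def by blast
      moreover have "v \<le> b"
        using e_least[of v] \<open>v \<in> X\<close> \<open>v < y\<close> \<open>\<not> e \<le> y\<close> by fastforce
      ultimately have "u \<in> S" "v \<in> S"
        using assms(1) by auto
      with y \<open>u < v\<close> \<open>v < y\<close> \<open>u + y = 2 * v\<close> show False
        unfolding three_free_def by blast
    qed
  qed
qed

lemma stanley_list_enumerates:
  assumes "finite A" "A \<noteq> {}" "A = X \<inter> {..Max A}" "three_free X" "blocked_above (Max A) X"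
  shows "sorted_wrt (<) (stanley_list A n) \<and> set (stanley_list A n) = X \<inter> {..last (stanley_list A n)} \<and>
    length (stanley_list A n) = card A + n \<and> Max A \<le> last (stanley_list A n)"
proof (induction n)
  case 0
  let ?l = "sorted_list_of_set A"
  have sorted: "sorted_wrt (<) ?l" and set: "set ?l = A"
    using assms(1) by (simp_all add: strict_sorted_list_of_set)
  have "last ?l = Max A"
  proof (rule antisym)
    show "last ?l \<le> Max A"
      using assms(1,2) set by (metis Max_ge last_in_set set_empty)
    show "Max A \<le> last ?l"
      using sorted_wrt_less_le_last[OF sorted] assms(1,2) set by simp
  qed
  then show ?case
    using sorted set assms(3) by simp
next
  case (Suc n)
  define l where "l = stanley_list A n"
  define e where "e = (LEAST x. x \<in> X \<and> last l < x)"
  have l: "sorted_wrt (<) l" "set l = X \<inter> {..last l}" "length l = card A + n" "Max A \<le> last l"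
    using Suc.IH unfolding l_def by auto
  have "stanley_list A (Suc n) = l @ [e]"
    using greedy_choice_eq[OF l(2) assms(4,5) l(4)] unfolding l_def e_def by (simp add: Let_def)
  moreover obtain x0 where "x0 \<in> X" "last l < x0"
    using blocked_above_infinite[OF assms(5)] by (metis finite_nat_set_iff_bounded_le not_le)
  then have e: "e \<in> X" "last l < e" and e_least: "\<And>y. y \<in> X \<Longrightarrow> last l < y \<Longrightarrow> e \<le> y"
    unfolding e_def by (metis (mono_tags, lifting) LeastI Least_le)+
  then have "X \<inter> {..e} = X \<inter> {..last l} \<union> {e}"
    by (auto, meson e_least not_le le_antisym)
  ultimately show ?case
    using l e sorted_wrt_less_le_last[OF l(1)] by (auto simp: sorted_wrt_append)
qed

lemma stanley_enumerates:
  assumes "finite A" "A \<noteq> {}" "A = X \<inter> {..Max A}" "three_free X" "blocked_above (Max A) X"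
  shows "stanley A i \<in> X \<and> card (X \<inter> {..<stanley A i}) = i"
proof -
  define l where "l = stanley_list A i"
  have sorted: "sorted_wrt (<) l" and set: "set l = X \<inter> {..last l}" and "length l = card A + i"
    using stanley_list_enumerates[OF assms, of i] unfolding l_def by auto
  then have i: "i < length l"
    using assms(1,2) by (simp add: card_gt_0_iff)
  have "l ! i \<le> last l"
    using sorted_wrt_less_le_last[OF sorted] i by simp
  then have "X \<inter> {..<l ! i} = {x \<in> set l. x < l ! i}"
    unfolding set by auto
  also have "\<dots> = set (take i l)"
    using set_take_sorted_wrt_less[OF sorted i] by simp
  finally have "X \<inter> {..<l ! i} = set (take i l)" .
  moreover have "distinct l"
    using sorted strict_sorted_iff by blast
  ultimately have "card (X \<inter> {..<l ! i}) = i"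
    using i by (simp add: distinct_card)
  moreover have "l ! i \<in> X"
    using nth_mem[OF i] set by blast
  ultimately show ?thesis
    unfolding stanley_def l_def by simp
qed

section \<open>Completions\<close>

text \<open>
  ap_cover m X says that every m + n is the top of a progression x, m + s, m + n with x in X and
  s in ternary01.  It is what blocks the candidates 3y + 2 at a position without allowed nonzero
  digit, where the middle terms 3(m + s) + 1 are the ones added to X.
\<close>

definition ap_cover :: "nat \<Rightarrow> nat set \<Rightarrow> bool" where
  "ap_cover m X \<longleftrightarrow> (\<forall>n. \<exists>s\<in>ternary01. \<exists>x\<in>X. s \<le> n \<and> x + n = m + 2 * s)"

lemma blocked_above_digit_one:
  assumes "blocked_above m X" "m \<in> X"
  shows "blocked_above (3 * m + 1) (digit_ext X X {})"
  unfolding blocked_above_def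
proof (intro allI impI)
  fix z
  assume "3 * m + 1 < z" "z \<notin> digit_ext X X {}"
  then consider w where "z = 3 * w" "m < w" "w \<notin> X" | w where "z = 3 * w + 1" "m < w" "w \<notin> X"
    | w where "z = 3 * w + 2" "m \<le> w"
    by (cases z rule: ternary_cases) auto
  then show "\<exists>a\<in>digit_ext X X {}. \<exists>b\<in>digit_ext X X {}. a < b \<and> b < z \<and> a + z = 2 * b"
  proof cases
    case (1 w)
    then obtain a b where "a \<in> X" "b \<in> X" "a < b" "b < w" "a + w = 2 * b"
      using assms(1) unfolding blocked_above_def by blast
    with 1 show ?thesis
      by (intro bexI[of _ "3 * a"] bexI[of _ "3 * b"]) auto
  next
    case (2 w)
    then obtain a b where "a \<in> X" "b \<in> X" "a < b" "b < w" "a + w = 2 * b"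
      using assms(1) unfolding blocked_above_def by blast
    with 2 show ?thesis
      by (intro bexI[of _ "Suc (3 * a)"] bexI[of _ "Suc (3 * b)"]) auto
  next
    case (3 w)
    show ?thesis
    proof (cases "w \<in> X")
      case True
      with 3 show ?thesis
        by (intro bexI[of _ "3 * w"] bexI[of _ "Suc (3 * w)"]) auto
    next
      case False
      then obtain a b where "a \<in> X" "b \<in> X" "a < b" "b < w" "a + w = 2 * b"
        using 3 assms unfolding blocked_above_def by (metis le_neq_implies_less)
      with 3 show ?thesis
        by (intro bexI[of _ "3 * a"] bexI[of _ "Suc (3 * b)"]) auto
    qed
  qed
qed

lemma blocked_above_digit_two:
  assumes "blocked_above m X" "m \<in> X"
  shows "blocked_above (3 * m + 2) (digit_ext X {} X)"
  unfolding blocked_above_def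
proof (intro allI impI)
  fix z
  assume z: "3 * m + 2 < z" "z \<notin> digit_ext X {} X"
  show "\<exists>a\<in>digit_ext X {} X. \<exists>b\<in>digit_ext X {} X. a < b \<and> b < z \<and> a + z = 2 * b"
  proof (cases z rule: ternary_cases)
    case (0 w)
    with z have "m < w" "w \<notin> X"
      by auto
    then obtain a b where "a \<in> X" "b \<in> X" "a < b" "b < w" "a + w = 2 * b"
      using assms(1) unfolding blocked_above_def by blast
    with 0 show ?thesis
      by (intro bexI[of _ "3 * a"] bexI[of _ "3 * b"]) auto
  next
    case (2 w)
    with z have "m < w" "w \<notin> X"
      by auto
    then obtain a b where "a \<in> X" "b \<in> X" "a < b" "b < w" "a + w = 2 * b"
      using assms(1) unfolding blocked_above_def by blast
    with 2 show ?thesis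
      by (intro bexI[of _ "Suc (Suc (3 * a))"] bexI[of _ "Suc (Suc (3 * b))"]) auto
  next
    case (1 w)
    define u where "u = w - 1"
    have u: "z = 3 * u + 4" "m \<le> u"
      using 1 z(1) unfolding u_def by auto
    show ?thesis
    proof (cases "u \<in> X")
      case True
      with u show ?thesis
        by (intro bexI[of _ "3 * u"] bexI[of _ "Suc (Suc (3 * u))"]) auto
    next
      case False
      with u(2) assms(2) have "m < u"
        using le_neq_implies_less by blast
      with False obtain a b where "a \<in> X" "b \<in> X" "a < b" "b < u" "a + u = 2 * b"
        using assms(1) unfolding blocked_above_def by blast
      with u show ?thesis
        by (intro bexI[of _ "3 * a"] bexI[of _ "Suc (Suc (3 * b))"]) auto
    qed
  qed
qed

lemma blocked_above_digit_zero:
  assumes "blocked_above m X" "ap_cover m X"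
  shows "blocked_above (3 * m) (digit_ext X ((+) m ` ternary01) {})"
  unfolding blocked_above_def
proof (intro allI impI)
  fix z
  let ?X = "digit_ext X ((+) m ` ternary01) {}"
  assume z: "3 * m < z" "z \<notin> ?X"
  show "\<exists>a\<in>?X. \<exists>b\<in>?X. a < b \<and> b < z \<and> a + z = 2 * b"
  proof (cases z rule: ternary_cases)
    case (0 w)
    with z have "m < w" "w \<notin> X"
      by auto
    then obtain a b where "a \<in> X" "b \<in> X" "a < b" "b < w" "a + w = 2 * b"
      using assms(1) unfolding blocked_above_def by blast
    with 0 show ?thesis
      by (intro bexI[of _ "3 * a"] bexI[of _ "3 * b"]) auto
  next
    case (1 w)
    define n where "n = w - m"
    have "w = m + n"
      using 1 z(1) unfolding n_def by simp
    moreover have "w \<notin> (+) m ` ternary01"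
      using 1 z(2) by simp
    ultimately have n: "z = 3 * (m + n) + 1" "n \<notin> ternary01"
      using 1 by auto
    then obtain a b where ab: "a \<in> ternary01" "b \<in> ternary01" "a < b" "b < n" "a + n = 2 * b"
      using ternary01_progression[of n] by blast
    then have "Suc (3 * (m + a)) \<in> ?X" "Suc (3 * (m + b)) \<in> ?X"
      unfolding digit_ext_simps by auto
    with n ab show ?thesis
      by (intro bexI[of _ "Suc (3 * (m + a))"] bexI[of _ "Suc (3 * (m + b))"]) auto
  next
    case (2 w)
    define n where "n = w - m"
    have n: "z = 3 * (m + n) + 2"
      using 2 z unfolding n_def by auto
    obtain s x where "s \<in> ternary01" "x \<in> X" "s \<le> n" "x + n = m + 2 * s"
      using assms(2) unfolding ap_cover_def by blast
    moreover from this have "Suc (3 * (m + s)) \<in> ?X"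
      unfolding digit_ext_simps by auto
    ultimately show ?thesis
      using n
      by (intro bexI[of _ "3 * x"] bexI[of _ "Suc (3 * (m + s))"]) auto
  qed
qed

lemma ap_cover_digit_one:
  assumes "ap_cover m X"
  shows "ap_cover (3 * m + 1) (digit_ext X X {})"
  unfolding ap_cover_def
proof
  fix n
  obtain s x where sx: "s \<in> ternary01" "x \<in> X" "s \<le> n div 3" "x + n div 3 = m + 2 * s"
    using assms unfolding ap_cover_def by blast
  show "\<exists>s\<in>ternary01. \<exists>x\<in>digit_ext X X {}. s \<le> n \<and> x + n = 3 * m + 1 + 2 * s"
  proof (cases n rule: ternary_cases)
    case 0
    with sx show ?thesis
      by (intro bexI[of _ "3 * s"] bexI[of _ "Suc (3 * x)"]) auto
  next
    case 1
    with sx show ?thesis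
      by (intro bexI[of _ "3 * s"] bexI[of _ "3 * x"]) auto
  next
    case 2
    with sx show ?thesis
      by (intro bexI[of _ "Suc (3 * s)"] bexI[of _ "Suc (3 * x)"]) auto
  qed
qed

lemma ap_cover_digit_two:
  assumes "ap_cover m X" "Suc m \<in> X"
  shows "ap_cover (3 * m + 2) (digit_ext X {} X)"
  unfolding ap_cover_def
proof
  fix n
  show "\<exists>s\<in>ternary01. \<exists>x\<in>digit_ext X {} X. s \<le> n \<and> x + n = 3 * m + 2 + 2 * s"
  proof (cases n rule: ternary_cases)
    case (0 q)
    obtain s x where "s \<in> ternary01" "x \<in> X" "s \<le> q" "x + q = m + 2 * s"
      using assms unfolding ap_cover_def by blast
    with 0 show ?thesis
      by (intro bexI[of _ "3 * s"] bexI[of _ "Suc (Suc (3 * x))"]) auto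
  next
    case (2 q)
    obtain s x where "s \<in> ternary01" "x \<in> X" "s \<le> q" "x + q = m + 2 * s"
      using assms unfolding ap_cover_def by blast
    with 2 show ?thesis
      by (intro bexI[of _ "3 * s"] bexI[of _ "3 * x"]) auto
  next
    case (1 q)
    show ?thesis
    proof (cases q)
      case 0
      have "3 * Suc m \<in> digit_ext X {} X"
        using assms(2) by (simp only: digit_ext_simps)
      moreover have "1 \<le> n" "3 * Suc m + n = 3 * m + 2 + 2 * 1"
        using 1 0 by simp_all
      ultimately show ?thesis
        using one_in_ternary01 by blast
    next
      case (Suc p)
      obtain s x where "s \<in> ternary01" "x \<in> X" "s \<le> p" "x + p = m + 2 * s"
        using assms unfolding ap_cover_def by blast
      with 1 Suc show ?thesis
        by (intro bexI[of _ "Suc (3 * s)"] bexI[of _ "3 * x"]) auto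
    qed
  qed
qed

lemma ap_cover_digit_zero:
  assumes "ap_cover m X"
  shows "ap_cover (3 * m) (digit_ext X ((+) m ` ternary01) {})"
  unfolding ap_cover_def
proof
  fix n
  let ?X = "digit_ext X ((+) m ` ternary01) {}"
  show "\<exists>s\<in>ternary01. \<exists>x\<in>?X. s \<le> n \<and> x + n = 3 * m + 2 * s"
  proof (cases n rule: ternary_cases)
    case (0 q)
    obtain s x where "s \<in> ternary01" "x \<in> X" "s \<le> q" "x + q = m + 2 * s"
      using assms unfolding ap_cover_def by blast
    with 0 show ?thesis
      by (intro bexI[of _ "3 * s"] bexI[of _ "3 * x"]) auto
  next
    case (2 q)
    obtain s x where "s \<in> ternary01" "x \<in> X" "s \<le> q" "x + q = m + 2 * s"
      using assms unfolding ap_cover_def by blast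
    with 2 show ?thesis
      by (intro bexI[of _ "Suc (3 * s)"] bexI[of _ "3 * x"]) auto
  next
    case (1 q)
    obtain a b where ab: "a \<in> ternary01" "b \<in> ternary01" "b \<le> q" "a + q = 2 * b"
      using ternary01_progression[of q] by blast
    then have "Suc (3 * (m + a)) \<in> ?X"
      unfolding digit_ext_simps by auto
    with 1 ab show ?thesis
      by (intro bexI[of _ "Suc (3 * b)"] bexI[of _ "Suc (3 * (m + a))"]) auto
  qed
qed

text \<open>X is to be the set of terms of S(A), see stanley_enumerates.\<close>

definition stanley_completion :: "nat set \<Rightarrow> nat set \<Rightarrow> bool" where
  "stanley_completion A X \<longleftrightarrow> finite A \<and> 0 \<in> A \<and> A = X \<inter> {..Max A} \<and> three_free X \<and>
     blocked_above (Max A) X \<and> ap_cover (Max A) X \<and>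
     (\<exists>n. block_periodic X n \<and> card (X \<inter> {..<3^n}) = 2^n)"

lemma stanley_completionI:
  assumes "A = X \<inter> {..m}" "m \<in> X" "0 \<in> X" "three_free X" "blocked_above m X" "ap_cover m X"
    and "block_periodic X n" "card (X \<inter> {..<3^n}) = 2^n"
  shows "stanley_completion A X"
proof -
  have "Max A = m"
    using assms(1,2) by (intro Max_eqI) auto
  with assms show ?thesis
    unfolding stanley_completion_def by auto
qed

lemma stanley_completionD:
  assumes "stanley_completion A X"
  shows "A = X \<inter> {..Max A}" "Max A \<in> X" "0 \<in> X" "three_free X" "blocked_above (Max A) X"
    "ap_cover (Max A) X" "\<exists>n. block_periodic X n \<and> card (X \<inter> {..<3^n}) = 2^n"
proof -
  have "finite A" "0 \<in> A" and A: "A = X \<inter> {..Max A}"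
    using assms unfolding stanley_completion_def by auto
  then show "A = X \<inter> {..Max A}" "Max A \<in> X" "0 \<in> X"
    by (metis Int_iff Max_in empty_iff)+
  show "three_free X" "blocked_above (Max A) X" "ap_cover (Max A) X"
    "\<exists>n. block_periodic X n \<and> card (X \<inter> {..<3^n}) = 2^n"
    using assms unfolding stanley_completion_def by auto
qed

lemma block_periodic_card_digit_ext:
  assumes "block_periodic Y n" "card (Y \<inter> {..<3^n}) = 2^n"
    and "block_periodic Z n" "card (Z \<inter> {..<3^n}) = 2^n"
  shows "block_periodic (digit_ext Y Z {}) (Suc n)" "card (digit_ext Y Z {} \<inter> {..<3^Suc n}) = 2^Suc n"
    and "block_periodic (digit_ext Y {} Z) (Suc n)" "card (digit_ext Y {} Z \<inter> {..<3^Suc n}) = 2^Suc n"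
  using assms block_periodic_digit_ext block_periodic_empty card_digit_ext[of _ _ _ "3^n"]
  by simp_all

lemma stanley_completion_ternary01: "stanley_completion {0} ternary01"
proof (rule stanley_completionI)
  show "blocked_above 0 ternary01"
    unfolding blocked_above_def using ternary01_progression by blast
  show "ap_cover 0 ternary01"
    unfolding ap_cover_def
  proof
    fix n
    obtain a b where "a \<in> ternary01" "b \<in> ternary01" "b \<le> n" "a + n = 2 * b"
      using ternary01_progression[of n] by blast
    then show "\<exists>s\<in>ternary01. \<exists>x\<in>ternary01. s \<le> n \<and> x + n = 0 + 2 * s"
      by auto
  qed
  show "block_periodic ternary01 0" "card (ternary01 \<inter> {..<3^0}) = 2^0"
    using block_periodic_ternary01 card_ternary01 by blast+
qed (auto simp: three_free_ternary01)

lemma stanley_completion_digit_one: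
  assumes "stanley_completion A X"
  shows "stanley_completion (digit_ext A A {}) (digit_ext X X {})"
proof -
  note X = stanley_completionD[OF assms]
  obtain n where n: "block_periodic X n" "card (X \<inter> {..<3^n}) = 2^n"
    using X(7) by blast
  show ?thesis
  proof (rule stanley_completionI)
    show "digit_ext A A {} = digit_ext X X {} \<inter> {..3 * Max A + 1}"
    proof (rule set_eqI)
      show "x \<in> digit_ext A A {} \<longleftrightarrow> x \<in> digit_ext X X {} \<inter> {..3 * Max A + 1}" for x
        by (subst (1 2) X(1), cases x rule: ternary_cases) auto
    qed
    show "blocked_above (3 * Max A + 1) (digit_ext X X {})"
      using X by (intro blocked_above_digit_one)
    show "ap_cover (3 * Max A + 1) (digit_ext X X {})"
      using X by (intro ap_cover_digit_one)
    show "three_free (digit_ext X X {})"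
      using X by (intro three_free_digit_ext) (auto simp: three_free_def)
    show "block_periodic (digit_ext X X {}) (Suc n)" "card (digit_ext X X {} \<inter> {..<3^Suc n}) = 2^Suc n"
      using block_periodic_card_digit_ext[OF n n] by blast+
  qed (use X in simp_all)
qed

lemma stanley_completion_digit_two:
  assumes "stanley_completion A X" "Suc (Max A) \<in> X"
  shows "stanley_completion (digit_ext A {} A) (digit_ext X {} X)"
proof -
  note X = stanley_completionD[OF assms(1)]
  obtain n where n: "block_periodic X n" "card (X \<inter> {..<3^n}) = 2^n"
    using X(7) by blast
  show ?thesis
  proof (rule stanley_completionI)
    show "digit_ext A {} A = digit_ext X {} X \<inter> {..3 * Max A + 2}"
    proof (rule set_eqI)
      show "x \<in> digit_ext A {} A \<longleftrightarrow> x \<in> digit_ext X {} X \<inter> {..3 * Max A + 2}" for x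
        by (subst (1 2) X(1), cases x rule: ternary_cases) auto
    qed
    show "blocked_above (3 * Max A + 2) (digit_ext X {} X)"
      using X by (intro blocked_above_digit_two)
    show "ap_cover (3 * Max A + 2) (digit_ext X {} X)"
      using X assms(2) by (intro ap_cover_digit_two)
    show "three_free (digit_ext X {} X)"
      using X by (intro three_free_digit_ext) (auto simp: three_free_def)
    show "block_periodic (digit_ext X {} X) (Suc n)" "card (digit_ext X {} X \<inter> {..<3^Suc n}) = 2^Suc n"
      using block_periodic_card_digit_ext[OF n n] by blast+
  qed (use X in simp_all)
qed

lemma stanley_completion_digit_zero:
  assumes "stanley_completion A X"
  shows "stanley_completion (digit_ext A {} {}) (digit_ext X ((+) (Max A) ` ternary01) {})"
proof -
  note X = stanley_completionD[OF assms]
  define m where "m = Max A"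
  obtain n0 where n0: "block_periodic X n0" "card (X \<inter> {..<3^n0}) = 2^n0"
    using X(7) by blast
  define n where "n = n0 + 2 * m"
  have "2 * m < 3^(2 * m)"
    by (simp add: power_gt_expt)
  also have "\<dots> \<le> 3^n"
    unfolding n_def by (intro power_increasing) auto
  finally have bounded: "\<forall>r\<in>ternary01. r < 3^n \<longrightarrow> m + r < 3^n"
    using ternary01_double_less by fastforce
  have "block_periodic X n" "card (X \<inter> {..<3^n}) = 2^n"
    using block_periodic_card_mono[OF n0] unfolding n_def by simp_all
  moreover have "block_periodic ((+) m ` ternary01) n" "card ((+) m ` ternary01 \<inter> {..<3^n}) = 2^n"
    using block_periodic_translate[OF block_periodic_ternary01 bounded] card_translate[OF bounded]
      card_ternary01 by simp_all
  ultimately have dense: "block_periodic (digit_ext X ((+) m ` ternary01) {}) (Suc n)"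
    "card (digit_ext X ((+) m ` ternary01) {} \<inter> {..<3^Suc n}) = 2^Suc n"
    using block_periodic_card_digit_ext by blast+
  show ?thesis
    unfolding m_def[symmetric]
  proof (rule stanley_completionI[OF _ _ _ _ _ _ dense])
    show "digit_ext A {} {} = digit_ext X ((+) m ` ternary01) {} \<inter> {..3 * m}"
    proof (rule set_eqI)
      show "x \<in> digit_ext A {} {} \<longleftrightarrow> x \<in> digit_ext X ((+) m ` ternary01) {} \<inter> {..3 * m}" for x
        by (subst X(1), cases x rule: ternary_cases) (auto simp: m_def)
    qed
    show "blocked_above (3 * m) (digit_ext X ((+) m ` ternary01) {})"
      using X unfolding m_def by (intro blocked_above_digit_zero)
    show "ap_cover (3 * m) (digit_ext X ((+) m ` ternary01) {})"
      using X unfolding m_def by (intro ap_cover_digit_zero)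
    show "three_free (digit_ext X ((+) m ` ternary01) {})"
      using X three_free_ternary01
      by (intro three_free_digit_ext three_free_translate) (auto simp: three_free_def)
  qed (use X in \<open>simp_all add: m_def\<close>)
qed

lemma stanley_completion_independent:
  assumes "stanley_completion A X"
  shows "independent (stanley A)"
proof -
  note X = stanley_completionD[OF assms]
  have "finite A" "A \<noteq> {}"
    using assms unfolding stanley_completion_def by auto
  then have "stanley A i \<in> X \<and> card (X \<inter> {..<stanley A i}) = i" for i
    using stanley_enumerates X by blast
  then show ?thesis
    using independent_enumeration X(3,7) by metis
qed

section \<open>The digit-by-digit construction\<close>

definition allowed_digits :: "nat set \<Rightarrow> nat set \<Rightarrow> nat \<Rightarrow> nat set" where
  "allowed_digits T1 T2 t = {d. d = 0 \<or> d = 1 \<and> t \<in> T1 \<or> d = 2 \<and> t \<in> T2}"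

lemma ternary_expansions_eq:
  assumes "T1 \<subseteq> {..k}" "T2 \<subseteq> {..k}" "T1 \<inter> T2 = {}"
  shows "{(\<Sum>a\<in>S1. 3^a) + 2 * (\<Sum>b\<in>S2. 3^b) | S1 S2. S1 \<subseteq> T1 \<and> S2 \<subseteq> T2} =
    {x. \<forall>t. ternary_digit x t \<in> allowed_digits T1 T2 t}"
proof (rule set_eqI, rule iffI)
  fix x :: nat
  assume "x \<in> {(\<Sum>a\<in>S1. 3^a) + 2 * (\<Sum>b\<in>S2. 3^b) | S1 S2. S1 \<subseteq> T1 \<and> S2 \<subseteq> T2}"
  then obtain S1 S2 where S: "S1 \<subseteq> T1" "S2 \<subseteq> T2" "x = (\<Sum>a\<in>S1. 3^a) + 2 * (\<Sum>b\<in>S2. 3^b)"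
    by blast
  with assms have "S1 \<subseteq> {..<Suc k}" "S2 \<subseteq> {..<Suc k}" "S1 \<inter> S2 = {}"
    by auto
  then have "ternary_digit x t = (if t \<in> S1 then 1 else if t \<in> S2 then 2 else 0)" for t
    using ternary_digit_expansion S(3) by simp
  with S show "x \<in> {x. \<forall>t. ternary_digit x t \<in> allowed_digits T1 T2 t}"
    by (auto simp: allowed_digits_def)
next
  fix x :: nat
  assume x: "x \<in> {x. \<forall>t. ternary_digit x t \<in> allowed_digits T1 T2 t}"
  define S1 where "S1 = {t \<in> T1. ternary_digit x t = 1}"
  define S2 where "S2 = {t \<in> T2. ternary_digit x t = 2}"
  have "S1 \<subseteq> {..<Suc k}" "S2 \<subseteq> {..<Suc k}" "S1 \<inter> S2 = {}"
    using assms unfolding S1_def S2_def by auto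
  then have "ternary_digit ((\<Sum>a\<in>S1. 3^a) + 2 * (\<Sum>b\<in>S2. 3^b)) t =
      (if t \<in> S1 then 1 else if t \<in> S2 then 2 else 0)" for t
    by (rule ternary_digit_expansion)
  moreover have "(if t \<in> S1 then 1 else if t \<in> S2 then 2 else 0) = ternary_digit x t" for t
  proof -
    have "ternary_digit x t \<in> allowed_digits T1 T2 t"
      using x by simp
    then show ?thesis
      unfolding S1_def S2_def allowed_digits_def by auto
  qed
  ultimately have "ternary_digit ((\<Sum>a\<in>S1. 3^a) + 2 * (\<Sum>b\<in>S2. 3^b)) t = ternary_digit x t" for t
    by simp
  then have "x = (\<Sum>a\<in>S1. 3^a) + 2 * (\<Sum>b\<in>S2. 3^b)"
    by (metis ternary_digits_eqI)
  then show "x \<in> {(\<Sum>a\<in>S1. 3^a) + 2 * (\<Sum>b\<in>S2. 3^b) | S1 S2. S1 \<subseteq> T1 \<and> S2 \<subseteq> T2}"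
    unfolding S1_def S2_def by blast
qed

fun completion_step :: "nat set \<Rightarrow> nat set \<Rightarrow> nat \<Rightarrow> nat set \<times> nat set \<Rightarrow> nat set \<times> nat set" where
  "completion_step T1 T2 p (A, X) =
     (if p \<in> T1 then (digit_ext A A {}, digit_ext X X {})
      else if p \<in> T2 then (digit_ext A {} A, digit_ext X {} X)
      else (digit_ext A {} {}, digit_ext X ((+) (Max A) ` ternary01) {}))"

text \<open>
  Step j + 1 appends the digit at position k - j, so completions k T1 T2 (Suc k) has processed
  all positions 0, ..., k.  In stanley_completion_completions, Suc k - j is the position
  processed last.
\<close>

fun completions :: "nat \<Rightarrow> nat set \<Rightarrow> nat set \<Rightarrow> nat \<Rightarrow> nat set \<times> nat set" where
  "completions k T1 T2 0 = ({0}, ternary01)"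
| "completions k T1 T2 (Suc j) = completion_step T1 T2 (k - j) (completions k T1 T2 j)"

lemma stanley_completion_completions:
  assumes adjacent: "\<forall>t\<in>T1. t \<ge> 1 \<longrightarrow> t - 1 \<notin> T2"
  shows "completions k T1 T2 j = (A, X) \<Longrightarrow> j \<le> Suc k \<Longrightarrow>
    stanley_completion A X \<and> (j = 0 \<or> Suc k - j \<notin> T1 \<longrightarrow> Suc (Max A) \<in> X)"
proof (induction j arbitrary: A X)
  case 0
  then show ?case
    using stanley_completion_ternary01 one_in_ternary01 by (auto simp: One_nat_def)
next
  case (Suc j)
  obtain A0 X0 where prev: "completions k T1 T2 j = (A0, X0)"
    by fastforce
  with Suc have IH: "stanley_completion A0 X0" "j = 0 \<or> Suc k - j \<notin> T1 \<Longrightarrow> Suc (Max A0) \<in> X0"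
    by auto
  then have "finite A0" "A0 \<noteq> {}"
    unfolding stanley_completion_def by auto
  have step: "completion_step T1 T2 (k - j) (A0, X0) = (A, X)" and "j \<le> k"
    using Suc.prems prev by simp_all
  consider "k - j \<in> T1" | "k - j \<notin> T1" "k - j \<in> T2" | "k - j \<notin> T1" "k - j \<notin> T2"
    by blast
  then show ?case
  proof cases
    case 1
    with step show ?thesis
      using stanley_completion_digit_one[OF IH(1)] \<open>j \<le> k\<close> by auto
  next
    case 2
    then have "j = 0 \<or> Suc k - j \<notin> T1"
      using adjacent \<open>j \<le> k\<close> by (metis Suc_diff_le diff_Suc_1 diff_Suc_Suc le_add1 plus_1_eq_Suc)
    then have "Suc (Max A0) \<in> X0"
      by (rule IH(2))
    moreover have "Suc (Suc (Suc (3 * Max A0))) = 3 * Suc (Max A0)"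
      by simp
    ultimately have "Suc (Suc (Suc (3 * Max A0))) \<in> digit_ext X0 {} X0"
      by (simp only: digit_ext_simps)
    with 2 step \<open>Suc (Max A0) \<in> X0\<close> show ?thesis
      using stanley_completion_digit_two[OF IH(1)] Max_digit_ext(2)[OF \<open>finite A0\<close> \<open>A0 \<noteq> {}\<close>]
        \<open>j \<le> k\<close> by auto
  next
    case 3
    with step show ?thesis
      using stanley_completion_digit_zero[OF IH(1)] Max_digit_ext(1)[OF \<open>finite A0\<close> \<open>A0 \<noteq> {}\<close>]
        \<open>j \<le> k\<close> by auto
  qed
qed

lemma fst_completion_step:
  assumes "T1 \<inter> T2 = {}"
  shows "fst (completion_step T1 T2 p S) = {x. x mod 3 \<in> allowed_digits T1 T2 p \<and> x div 3 \<in> fst S}"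
proof (rule set_eqI)
  fix x
  obtain A X where "S = (A, X)"
    by fastforce
  with assms show "x \<in> fst (completion_step T1 T2 p S) \<longleftrightarrow> x \<in> {x. x mod 3 \<in> allowed_digits T1 T2 p \<and> x div 3 \<in> fst S}"
    by (cases x rule: ternary_cases) (auto simp: allowed_digits_def)
qed

lemma fst_completions:
  assumes "T1 \<inter> T2 = {}" "T1 \<subseteq> {..k}" "T2 \<subseteq> {..k}"
  shows "j \<le> Suc k \<Longrightarrow>
    fst (completions k T1 T2 j) = {x. \<forall>t. ternary_digit x t \<in> allowed_digits T1 T2 (Suc k - j + t)}"
proof (induction j)
  case 0
  have "allowed_digits T1 T2 (Suc k + t) = {0}" for t
    using assms(2,3) by (auto simp: allowed_digits_def)
  then have "{x. \<forall>t. ternary_digit x t \<in> allowed_digits T1 T2 (Suc k - 0 + t)} = {x. \<forall>t. ternary_digit x t = 0}"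
    by simp
  also have "\<dots> = {0}"
  proof -
    have zero: "ternary_digit 0 t = 0" for t
      by (simp add: ternary_digit_def)
    then have "(\<forall>t. ternary_digit x t = 0) \<longleftrightarrow> x = 0" for x
      using ternary_digits_eqI[of x 0] by auto
    then show ?thesis
      by auto
  qed
  finally show ?case
    by simp
next
  case (Suc j)
  then have "Suc k - j + t = k - j + Suc t" for t
    by simp
  then have "(\<forall>t. ternary_digit x t \<in> allowed_digits T1 T2 (Suc k - Suc j + t)) \<longleftrightarrow>
      x mod 3 \<in> allowed_digits T1 T2 (k - j) \<and>
      (\<forall>t. ternary_digit (x div 3) t \<in> allowed_digits T1 T2 (Suc k - j + t))" for x
    using all_ternary_digits[of "\<lambda>t d. d \<in> allowed_digits T1 T2 (k - j + t)" x] by simp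
  with Suc show ?case
    using fst_completion_step[OF assms(1)] by simp
qed

theorem theorem3:
  fixes k :: nat and T1 T2 :: "nat set"
  assumes "k > 0"
    and "T1 \<subseteq> {0..k}" and "T2 \<subseteq> {0..k}"
    and "T1 \<inter> T2 = {}"
    and "\<forall>t\<in>T1. t \<ge> 1 \<longrightarrow> t - 1 \<notin> T2"
  shows "independent (stanley
           {(\<Sum>a\<in>S1. 3^a) + 2 * (\<Sum>b\<in>S2. 3^b) | S1 S2. S1 \<subseteq> T1 \<and> S2 \<subseteq> T2})"
proof -
  obtain A X where AX: "completions k T1 T2 (Suc k) = (A, X)"
    by fastforce
  have "A = {(\<Sum>a\<in>S1. 3^a) + 2 * (\<Sum>b\<in>S2. 3^b) | S1 S2. S1 \<subseteq> T1 \<and> S2 \<subseteq> T2}"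
    using fst_completions[of T1 T2 k "Suc k"] ternary_expansions_eq[of T1 k T2] AX assms(2-4) by (simp add: atLeast0AtMost)
  moreover have "stanley_completion A X"
    using stanley_completion_completions[OF assms(5) AX] by simp
  ultimately show ?thesis
    using stanley_completion_independent by blast
qed

end
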